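(* Let $\mathcal{M}'$ be an RRSF mechanism with respect to coefficients $\mathbf{W}=\{W^k_{i,j}\}_{k\in[n],i,j\in[m_k]}$, with parameters $(q^*,\mu^*,\pi^* )$, i.e. for each agent $k$, $q^*$ is an optimal solution of $(P^3)$ with coefficients $W^k$ and $(\mu^*,\pi^* )$ together with some $\lambda^*$ satisfy the KKT conditions of $(P^3)$ at $q^*$. Then for every agent $k$ and $i\in[m_k]$, $\sum_{j\in[m_k]}q^*_{i,j}W^k_{i,j}-\hat p_k(t_k^{(i)})\ge0$.
   Context: Agent $k$ has type support $\{t_k^{(1)},\dots,t_k^{(m_k)}\}$ with probabilities $F_i>0$; coefficients $W^k_{i,j}\in[-1,1]$. With $\gamma>0$, $\phi(\mathbf{q})=\frac12\gamma\|\mathbf{q}\|_2^2$; $(P^3)$: maximize $\sum_iF_i(\sum_jW_{i,j}q_{i,j}-\phi(\mathbf{q}_i))$ s.t. $\sum_jq_{i,j}=1$ ($\forall i$), $\sum_iF_iq_{i,j}=F_j$ ($\forall j$), $q_{i,j}\ge0$. KKT conditions: $F_i(W_{i,j}-\partial\phi(\mathbf{q}^*_i)/\partial q_{i,j})=\lambda^*_{i,j}+\mu^*_i+F_i\pi^*_j$, $\lambda^*_{i,j}\le0$, $\lambda^*_{i,j}q^*_{i,j}=0$ for all $i,j$. In the RRSF mechanism, agent $k$ reporting $t_k^{(i)}$ is represented by surrogate $t_k^{(j)}$ with probability $q^*_{i,j}$ in an underlying mechanism and additionally pays $\hat p_k(t_k^{(i)})=\sum_j\pi^*_jq^*_{i,j}+\phi(\mathbf{q}^*_i)-\phi(\mathbf{0})+\min_\ell\mu^*_\ell/F_\ell$.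 *)

theory Defs
  imports Complex_Main
begin

(* Types of an agent are indexed 0..m-1; a vector q_i is a function nat => real on {..<m}. *)

definition phi :: "real \<Rightarrow> nat \<Rightarrow> (nat \<Rightarrow> real) \<Rightarrow> real" where
  "phi \<gamma> m x = \<gamma> / 2 * (\<Sum>j<m. (x j)^2)"

definition P3_feasible :: "nat \<Rightarrow> (nat \<Rightarrow> real) \<Rightarrow> (nat \<Rightarrow> nat \<Rightarrow> real) \<Rightarrow> bool" where
  "P3_feasible m F q \<longleftrightarrow>
     (\<forall>i<m. (\<Sum>j<m. q i j) = 1) \<and>
     (\<forall>j<m. (\<Sum>i<m. F i * q i j) = F j) \<and>
     (\<forall>i<m. \<forall>j<m. q i j \<ge> 0)"

definition P3_obj :: "real \<Rightarrow> nat \<Rightarrow> (nat \<Rightarrow> real) \<Rightarrow> (nat \<Rightarrow> nat \<Rightarrow> real)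
    \<Rightarrow> (nat \<Rightarrow> nat \<Rightarrow> real) \<Rightarrow> real" where
  "P3_obj \<gamma> m F W q = (\<Sum>i<m. F i * ((\<Sum>j<m. W i j * q i j) - phi \<gamma> m (q i)))"

definition P3_optimal :: "real \<Rightarrow> nat \<Rightarrow> (nat \<Rightarrow> real) \<Rightarrow> (nat \<Rightarrow> nat \<Rightarrow> real)
    \<Rightarrow> (nat \<Rightarrow> nat \<Rightarrow> real) \<Rightarrow> bool" where
  "P3_optimal \<gamma> m F W q \<longleftrightarrow> P3_feasible m F q \<and>
     (\<forall>q'. P3_feasible m F q' \<longrightarrow> P3_obj \<gamma> m F W q' \<le> P3_obj \<gamma> m F W q)"

(* KKT conditions; the partial derivative of phi(q_i) w.r.t. q_{i,j} is gamma * q_{i,j} *)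
definition P3_KKT :: "real \<Rightarrow> nat \<Rightarrow> (nat \<Rightarrow> real) \<Rightarrow> (nat \<Rightarrow> nat \<Rightarrow> real)
    \<Rightarrow> (nat \<Rightarrow> nat \<Rightarrow> real) \<Rightarrow> (nat \<Rightarrow> nat \<Rightarrow> real) \<Rightarrow> (nat \<Rightarrow> real) \<Rightarrow> (nat \<Rightarrow> real) \<Rightarrow> bool" where
  "P3_KKT \<gamma> m F W q lam mu ppi \<longleftrightarrow>
     (\<forall>i<m. \<forall>j<m. F i * (W i j - \<gamma> * q i j) = lam i j + mu i + F i * ppi j
                  \<and> lam i j \<le> 0 \<and> lam i j * q i j = 0)"

definition rrsf_payment :: "real \<Rightarrow> nat \<Rightarrow> (nat \<Rightarrow> real) \<Rightarrow> (nat \<Rightarrow> nat \<Rightarrow> real)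
    \<Rightarrow> (nat \<Rightarrow> real) \<Rightarrow> (nat \<Rightarrow> real) \<Rightarrow> nat \<Rightarrow> real" where
  "rrsf_payment \<gamma> m F q mu ppi i =
     (\<Sum>j<m. ppi j * q i j) + phi \<gamma> m (q i) - phi \<gamma> m (\<lambda>_. 0)
     + Min ((\<lambda>l. mu l / F l) ` {..<m})"

end

theory Submission
  imports Defs
begin

(* Multiplying the KKT equation of row i by q_ij, summing over j and using complementary
   slackness together with sum_j q_ij = 1 gives
     sum_j q_ij W_ij = 2 phi(q_i) + mu_i / F_i + sum_j pi_j q_ij.
   Since min_l mu_l / F_l <= mu_i / F_i and phi(0) = 0, the payment is at most
   sum_j pi_j q_ij + phi(q_i) + mu_i / F_i, so the utility is at least phi(q_i) >= 0. *)

lemma phi_zero [simp]: "phi \<gamma> m (\<lambda>_. 0) = 0"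
  by (simp add: phi_def)

lemma phi_nonneg: "\<gamma> \<ge> 0 \<Longrightarrow> phi \<gamma> m x \<ge> 0"
  by (simp add: phi_def sum_nonneg)

lemma P3_KKT_row_value:
  assumes kkt: "P3_KKT \<gamma> m F W q lam mu ppi"
    and i: "i < m" and Fi: "F i > 0" and row_sum: "(\<Sum>j<m. q i j) = 1"
  shows "(\<Sum>j<m. q i j * W i j) = 2 * phi \<gamma> m (q i) + mu i / F i + (\<Sum>j<m. ppi j * q i j)"
proof -
  have term_eq: "q i j * W i j = \<gamma> * (q i j)\<^sup>2 + q i j * (mu i / F i) + ppi j * q i j"
    if j: "j < m" for j
  proof -
    have stationary: "F i * (W i j - \<gamma> * q i j) = lam i j + mu i + F i * ppi j"
      and slack: "lam i j * q i j = 0"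
      using kkt i j by (auto simp: P3_KKT_def)
    from stationary have "q i j * (F i * (W i j - \<gamma> * q i j)) = q i j * (lam i j + mu i + F i * ppi j)"
      by simp
    with slack Fi have "F i * (q i j * W i j) = F i * (\<gamma> * (q i j)\<^sup>2 + q i j * (mu i / F i) + ppi j * q i j)"
      by (simp add: algebra_simps power2_eq_square)
    with Fi show ?thesis by simp
  qed
  have "(\<Sum>j<m. q i j * W i j) = (\<Sum>j<m. \<gamma> * (q i j)\<^sup>2 + q i j * (mu i / F i) + ppi j * q i j)"
    using term_eq by (intro sum.cong) auto
  also have "\<dots> = \<gamma> * (\<Sum>j<m. (q i j)\<^sup>2) + (\<Sum>j<m. q i j) * (mu i / F i) + (\<Sum>j<m. ppi j * q i j)"
    by (simp add: sum.distrib sum_distrib_left sum_distrib_right sum_divide_distrib)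
  finally show ?thesis
    using row_sum by (simp add: phi_def)
qed

lemma rrsf_payment_le:
  assumes "i < m"
  shows "rrsf_payment \<gamma> m F q mu ppi i \<le> (\<Sum>j<m. ppi j * q i j) + phi \<gamma> m (q i) + mu i / F i"
proof -
  have "Min ((\<lambda>l. mu l / F l) ` {..<m}) \<le> mu i / F i"
    using assms by (intro Min_le) auto
  then show ?thesis
    by (simp add: rrsf_payment_def)
qed

lemma rrsf_utility_ge_phi:
  assumes feasible: "P3_feasible m F q" and kkt: "P3_KKT \<gamma> m F W q lam mu ppi"
    and i: "i < m" and Fi: "F i > 0"
  shows "(\<Sum>j<m. q i j * W i j) - rrsf_payment \<gamma> m F q mu ppi i \<ge> phi \<gamma> m (q i)"
proof -
  have "(\<Sum>j<m. q i j) = 1"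
    using feasible i by (simp add: P3_feasible_def)
  with P3_KKT_row_value[OF kkt i Fi] rrsf_payment_le[OF i, of \<gamma> F q mu ppi]
  show ?thesis by simp
qed

theorem mainTheorem14:
  fixes n :: nat and m :: "nat \<Rightarrow> nat" and \<gamma> :: real
    and F :: "nat \<Rightarrow> nat \<Rightarrow> real" and W :: "nat \<Rightarrow> nat \<Rightarrow> nat \<Rightarrow> real"
    and q lam :: "nat \<Rightarrow> nat \<Rightarrow> nat \<Rightarrow> real" and mu ppi :: "nat \<Rightarrow> nat \<Rightarrow> real"
  assumes gamma_pos: "\<gamma> > 0"
    and m_pos: "\<forall>k<n. m k \<ge> 1"
    and F_pos: "\<forall>k<n. \<forall>i<m k. F k i > 0"
    and F_sum: "\<forall>k<n. (\<Sum>i<m k. F k i) = 1"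
    and W_bound: "\<forall>k<n. \<forall>i<m k. \<forall>j<m k. -1 \<le> W k i j \<and> W k i j \<le> 1"
    and opt: "\<forall>k<n. P3_optimal \<gamma> (m k) (F k) (W k) (q k)"
    and kkt: "\<forall>k<n. P3_KKT \<gamma> (m k) (F k) (W k) (q k) (lam k) (mu k) (ppi k)"
  shows "\<forall>k<n. \<forall>i<m k.
           (\<Sum>j<m k. q k i j * W k i j) - rrsf_payment \<gamma> (m k) (F k) (q k) (mu k) (ppi k) i \<ge> 0"
proof (intro allI impI)
  fix k i assume k: "k < n" and i: "i < m k"
  have "P3_feasible (m k) (F k) (q k)"
    using opt k by (simp add: P3_optimal_def)
  moreover have "F k i > 0"
    using F_pos k i by simp
  ultimately have "(\<Sum>j<m k. q k i j * W k i j) - rrsf_payment \<gamma> (m k) (F k) (q k) (mu k) (ppi k) i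
      \<ge> phi \<gamma> (m k) (q k i)"
    using rrsf_utility_ge_phi kkt k i by blast
  moreover have "phi \<gamma> (m k) (q k i) \<ge> 0"
    using gamma_pos by (simp add: phi_nonneg)
  ultimately show "(\<Sum>j<m k. q k i j * W k i j) - rrsf_payment \<gamma> (m k) (F k) (q k) (mu k) (ppi k) i \<ge> 0"
    by linarith
qed

end
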